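(* Let $N\ge1$, $T>0$, $M>0$, and let $\alpha\in\mathcal U_M$ be an optimal control for the problem of minimizing $\mathbb V(T)=\frac1N\sum_{i=1}^N\xi_i(T)^2$ over $\mathcal U_M$, where $\xi$ solves $\dot\xi_i=-\xi_i+(1-\alpha_i)\bar\xi$, $\bar\xi=\frac1N\sum_j\xi_j$, from a fixed initial datum $\xi(0)$ with $\bar\xi(0)>0$ and $\xi_1(0)\ge\dots\ge\xi_N(0)$. Let $\lambda=(\lambda_1,\dots,\lambda_N)$ be a covector associated with $\alpha$ by the Pontryagin maximum principle, i.e. $\dot\lambda_i=\frac1N\sum_{j}\alpha_j\lambda_j-\bar\lambda+\lambda_i$ with $\bar\lambda=\frac1N\sum_j\lambda_j$, $\lambda_i(T)=\frac2N\xi_i(T)$, and for almost every $t$, $\alpha(t)$ minimizes $a\mapsto -\bar\xi(t)\sum_i a_i\lambda_i(t)$ over $a\in[0,1]^N$ with $\sum_i a_i\le M$. Define $I_\lambda(t)=\{i:\lambda_i(t)\ge0\}$ and $I_\lambda^+(t)=\{i:\lambda_i(t)>0\}$. Then for almost every $t\in[0,T]$: if $I_\lambda(t)=\emptyset$, then $\alpha_i(t)=0$ for every $i$; if $I_\lambda^+(t)\neq\emptyset$, then there exists $i\in I_\lambda^+(t)$ with $\alpha_i(t)>0$, and $\sum_j\alpha_j(t)\ge\min(|I_\lambda^+(t)|,M)$.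
   Context: $\mathcal U_M$ is the set of measurable $\alpha:[0,T]\to[0,1]^N$ with $\sum_i\alpha_i(t)\le M$ for all $t$. The variables $\xi_i$ are the projections of the agents' velocities on the direction of the mean velocity in a collective migration model with target velocity $0$. $|\cdot|$ is cardinality. *)

theory Defs
  imports "HOL-Analysis.Analysis"
begin

text \<open>Agents are indexed by i < N (i = 0..N-1 corresponds to 1..N in the paper).
  Time-dependent vectors are functions real => nat => real, only the values for
  t in [0,T] and i < N matter.\<close>

definition mean :: "nat \<Rightarrow> (nat \<Rightarrow> real) \<Rightarrow> real" where
  "mean N x = (\<Sum>j<N. x j) / real N"

definition admissible :: "nat \<Rightarrow> real \<Rightarrow> real \<Rightarrow> (real \<Rightarrow> nat \<Rightarrow> real) \<Rightarrow> bool" where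
  "admissible N M T \<alpha> \<longleftrightarrow>
     (\<forall>i<N. (\<lambda>t. \<alpha> t i) \<in> borel_measurable (lebesgue_on {0..T})) \<and>
     (\<forall>t\<in>{0..T}. (\<forall>i<N. 0 \<le> \<alpha> t i \<and> \<alpha> t i \<le> 1) \<and> (\<Sum>i<N. \<alpha> t i) \<le> M)"

definition state_sol :: "nat \<Rightarrow> real \<Rightarrow> (real \<Rightarrow> nat \<Rightarrow> real) \<Rightarrow> (nat \<Rightarrow> real)
    \<Rightarrow> (real \<Rightarrow> nat \<Rightarrow> real) \<Rightarrow> bool" where
  "state_sol N T \<alpha> \<xi>0 \<xi> \<longleftrightarrow>
     (\<forall>i<N. continuous_on {0..T} (\<lambda>t. \<xi> t i)) \<and>
     (\<forall>t\<in>{0..T}. \<forall>i<N.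
        (\<lambda>s. - \<xi> s i + (1 - \<alpha> s i) * mean N (\<xi> s)) integrable_on {0..t} \<and>
        \<xi> t i = \<xi>0 i + integral {0..t} (\<lambda>s. - \<xi> s i + (1 - \<alpha> s i) * mean N (\<xi> s)))"

definition cost :: "nat \<Rightarrow> real \<Rightarrow> (real \<Rightarrow> nat \<Rightarrow> real) \<Rightarrow> real" where
  "cost N T \<xi> = (\<Sum>i<N. (\<xi> T i)\<^sup>2) / real N"

definition optimal_control :: "nat \<Rightarrow> real \<Rightarrow> real \<Rightarrow> (nat \<Rightarrow> real) \<Rightarrow> (real \<Rightarrow> nat \<Rightarrow> real) \<Rightarrow> bool" where
  "optimal_control N M T \<xi>0 \<alpha> \<longleftrightarrow>
     admissible N M T \<alpha> \<and>
     (\<exists>\<xi>. state_sol N T \<alpha> \<xi>0 \<xi> \<and>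
        (\<forall>\<beta> \<zeta>. admissible N M T \<beta> \<and> state_sol N T \<beta> \<xi>0 \<zeta> \<longrightarrow> cost N T \<xi> \<le> cost N T \<zeta>))"

definition costate_sol :: "nat \<Rightarrow> real \<Rightarrow> (real \<Rightarrow> nat \<Rightarrow> real) \<Rightarrow> (real \<Rightarrow> nat \<Rightarrow> real)
    \<Rightarrow> (real \<Rightarrow> nat \<Rightarrow> real) \<Rightarrow> bool" where
  "costate_sol N T \<alpha> \<xi> lam \<longleftrightarrow>
     (\<forall>i<N. continuous_on {0..T} (\<lambda>t. lam t i)) \<and>
     (\<forall>i<N. lam T i = 2 / real N * \<xi> T i) \<and>
     (\<forall>t\<in>{0..T}. \<forall>i<N.
        (\<lambda>s. mean N (\<lambda>j. \<alpha> s j * lam s j) - mean N (lam s) + lam s i) integrable_on {t..T} \<and>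
        lam t i = lam T i - integral {t..T}
                    (\<lambda>s. mean N (\<lambda>j. \<alpha> s j * lam s j) - mean N (lam s) + lam s i))"

definition pmp_min :: "nat \<Rightarrow> real \<Rightarrow> real \<Rightarrow> (real \<Rightarrow> nat \<Rightarrow> real) \<Rightarrow> (real \<Rightarrow> nat \<Rightarrow> real)
    \<Rightarrow> (real \<Rightarrow> nat \<Rightarrow> real) \<Rightarrow> bool" where
  "pmp_min N M T \<alpha> \<xi> lam \<longleftrightarrow>
     (AE t in lborel. t \<in> {0..T} \<longrightarrow>
        (\<forall>a. (\<forall>i<N. 0 \<le> a i \<and> a i \<le> 1) \<and> (\<Sum>i<N. a i) \<le> M \<longrightarrow>
           - mean N (\<xi> t) * (\<Sum>i<N. \<alpha> t i * lam t i)
             \<le> - mean N (\<xi> t) * (\<Sum>i<N. a i * lam t i)))"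

end

theory Submission
  imports Defs
begin

text \<open>Since \<open>N \<cdot> mean' = -(\<Sum>\<^sub>i \<alpha>\<^sub>i) \<cdot> mean\<close> with \<open>0 \<le> \<Sum>\<^sub>i \<alpha>\<^sub>i \<le> N\<close>, the mean of the state never
  reaches zero, so the minimality condition of the maximum principle can be divided by it: at
  almost every time, \<open>\<alpha>(t)\<close> maximizes the linear functional \<open>a \<mapsto> \<Sum>\<^sub>i a\<^sub>i \<lambda>\<^sub>i(t)\<close> over the capped
  box \<open>[0,1]\<^sup>N \<inter> {\<Sum>\<^sub>i a\<^sub>i \<le> M}\<close>. The claims are then elementary properties of such maximizers:
  mass on a negative weight could be removed, unused capacity could be put on a positive weight,
  and mass on a nonpositive weight could be moved to a positive weight carrying none.\<close>

definition capped_box :: "nat \<Rightarrow> real \<Rightarrow> (nat \<Rightarrow> real) set" where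
  "capped_box N M = {a. (\<forall>i<N. 0 \<le> a i \<and> a i \<le> 1) \<and> (\<Sum>i<N. a i) \<le> M}"

lemma sum_add_at_index:
  fixes x l :: "nat \<Rightarrow> real"
  assumes "i < N"
  shows "(\<Sum>j<N. (x j + (if j = i then c else 0)) * l j) = (\<Sum>j<N. x j * l j) + c * l i"
proof -
  have "(\<Sum>j<N. (x j + (if j = i then c else 0)) * l j)
      = (\<Sum>j<N. x j * l j + (if j = i then c * l j else 0))"
    by (intro sum.cong) (auto simp: distrib_right)
  also have "\<dots> = (\<Sum>j<N. x j * l j) + c * l i"
    using assms by (simp add: sum.distrib)
  finally show ?thesis .
qed

lemma capped_box_maximizer_vanishes_if_weights_negative:
  fixes x l :: "nat \<Rightarrow> real"
  assumes x: "x \<in> capped_box N M"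
    and max: "\<forall>a\<in>capped_box N M. (\<Sum>i<N. a i * l i) \<le> (\<Sum>i<N. x i * l i)"
    and neg: "\<forall>i<N. l i < 0"
  shows "\<forall>i<N. x i = 0"
proof -
  have "0 \<le> (\<Sum>i<N. x i)" using x by (intro sum_nonneg) (auto simp: capped_box_def)
  then have "(\<lambda>_. 0) \<in> capped_box N M" using x by (auto simp: capped_box_def)
  from bspec[OF max this] have "0 \<le> (\<Sum>i<N. x i * l i)" by simp
  moreover have nonneg: "\<forall>i\<in>{..<N}. 0 \<le> - (x i * l i)"
    using x neg by (auto simp: capped_box_def mult_nonneg_nonpos)
  ultimately have "(\<Sum>i<N. - (x i * l i)) = 0"
    using sum_nonneg[of "{..<N}" "\<lambda>i. - (x i * l i)"] by (simp add: sum_negf)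
  then have "\<forall>i\<in>{..<N}. x i * l i = 0"
    using sum_nonneg_eq_0_iff[of "{..<N}" "\<lambda>i. - (x i * l i)"] nonneg by simp
  then show ?thesis using neg by fastforce
qed

lemma capped_box_maximizer_sum_ge:
  fixes x l :: "nat \<Rightarrow> real"
  assumes x: "x \<in> capped_box N M"
    and max: "\<forall>a\<in>capped_box N M. (\<Sum>i<N. a i * l i) \<le> (\<Sum>i<N. x i * l i)"
  shows "(\<Sum>i<N. x i) \<ge> min (real (card {i. i < N \<and> l i > 0})) M"
proof (rule ccontr)
  define I where "I = {i. i < N \<and> l i > 0}"
  assume "\<not> ?thesis"
  then have below_card: "(\<Sum>i<N. x i) < real (card I)" and below_M: "(\<Sum>i<N. x i) < M"
    unfolding I_def by auto
  have "\<exists>i\<in>I. x i < 1"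
  proof (rule ccontr)
    assume "\<not> ?thesis"
    then have "real (card I) \<le> (\<Sum>i\<in>I. x i)"
      using sum_mono[of I "\<lambda>_. 1" x] by (simp add: not_less)
    also have "\<dots> \<le> (\<Sum>i<N. x i)"
      using x by (intro sum_mono2) (auto simp: I_def capped_box_def)
    finally show False using below_card by simp
  qed
  then obtain i where i: "i < N" "l i > 0" "x i < 1" by (auto simp: I_def)
  define \<epsilon> where "\<epsilon> = min (1 - x i) (M - (\<Sum>j<N. x j))"
  have "\<epsilon> > 0" using i below_M by (simp add: \<epsilon>_def)
  define a where "a j = x j + (if j = i then \<epsilon> else 0)" for j
  have "(\<Sum>j<N. a j) = (\<Sum>j<N. x j) + \<epsilon>"
    using sum_add_at_index[OF i(1), of x \<epsilon> "\<lambda>_. 1"] by (simp add: a_def)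
  then have "a \<in> capped_box N M"
    using x \<open>\<epsilon> > 0\<close> by (auto simp: capped_box_def a_def \<epsilon>_def)
  then have "(\<Sum>j<N. x j * l j) + \<epsilon> * l i \<le> (\<Sum>j<N. x j * l j)"
    using max sum_add_at_index[OF i(1), of x \<epsilon> l] unfolding a_def by metis
  then show False using mult_pos_pos[OF \<open>\<epsilon> > 0\<close> i(2)] by linarith
qed

lemma capped_box_maximizer_charges_positive_weight:
  fixes x l :: "nat \<Rightarrow> real"
  assumes x: "x \<in> capped_box N M"
    and max: "\<forall>a\<in>capped_box N M. (\<Sum>i<N. a i * l i) \<le> (\<Sum>i<N. x i * l i)"
    and "M > 0" and k: "k < N" "l k > 0"
  shows "\<exists>i<N. l i > 0 \<and> x i > 0"
proof (rule ccontr)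
  assume none: "\<not> ?thesis"
  have "card {i. i < N \<and> l i > 0} \<noteq> 0" using k by auto
  then have "(\<Sum>i<N. x i) > 0"
    using capped_box_maximizer_sum_ge[OF x max] \<open>M > 0\<close> by linarith
  then obtain j where j: "j < N" "x j > 0"
    using sum_nonpos[of "{..<N}" x] by (meson lessThan_iff not_le)
  have "l j \<le> 0" using none j by force
  have "x k = 0" using none k x by (force simp: capped_box_def)
  define y where "y i = x i + (if i = k then x j else 0)" for i
  define a where "a i = y i + (if i = j then - x j else 0)" for i
  have "k \<noteq> j" using k \<open>l j \<le> 0\<close> by auto
  have "(\<Sum>i<N. a i) = (\<Sum>i<N. x i)"
    using sum_add_at_index[OF k(1), of x "x j" "\<lambda>_. 1"]
      sum_add_at_index[OF j(1), of y "- x j" "\<lambda>_. 1"] by (simp add: a_def y_def)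
  then have "a \<in> capped_box N M"
    using x \<open>x k = 0\<close> \<open>k \<noteq> j\<close> j by (auto simp: capped_box_def a_def y_def)
  then have "(\<Sum>i<N. a i * l i) \<le> (\<Sum>i<N. x i * l i)" using max by blast
  moreover have "(\<Sum>i<N. a i * l i) = (\<Sum>i<N. x i * l i) + x j * l k - x j * l j"
    using sum_add_at_index[OF k(1), of x "x j" l] sum_add_at_index[OF j(1), of y "- x j" l]
    unfolding a_def y_def by simp
  moreover have "x j * l k > 0" "x j * l j \<le> 0"
    using j k \<open>l j \<le> 0\<close> by (auto simp: mult_nonneg_nonpos)
  ultimately show False by linarith
qed

lemma integral_equation_increment_bound:
  fixes m g :: "real \<Rightarrow> real"
  assumes eq: "\<forall>t\<in>{0..T}. g integrable_on {0..t} \<and> m t = m0 + integral {0..t} g"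
    and "0 \<le> a" "a \<le> t" "t \<le> T"
    and bound: "\<forall>s\<in>{a..t}. \<bar>g s\<bar> \<le> B"
  shows "\<bar>m t - m a\<bar> \<le> B * (t - a)"
proof -
  have g_int: "g integrable_on {0..t}" and "m t = m0 + integral {0..t} g"
    using eq assms(2-4) by auto
  moreover have "m a = m0 + integral {0..a} g" using eq assms(2-4) by auto
  moreover have "integral {0..a} g + integral {a..t} g = integral {0..t} g"
    using Henstock_Kurzweil_Integration.integral_combine[of 0 a t g] g_int assms(2,3) by auto
  ultimately have "m t - m a = integral {a..t} g" by linarith
  moreover have "g integrable_on cbox a t"
    using integrable_subinterval_real[OF g_int, of a t] assms(2) by auto
  moreover have "0 \<le> B" using bound assms(3) by force
  ultimately show ?thesis
    using Henstock_Kurzweil_Integration.integrable_bound[of B g a t] bound assms(3) by simp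
qed

lemma integral_equation_positive_on_short_interval:
  fixes m g :: "real \<Rightarrow> real"
  assumes cont: "continuous_on {0..T} m"
    and eq: "\<forall>t\<in>{0..T}. g integrable_on {0..t} \<and> m t = m0 + integral {0..t} g"
    and growth: "\<forall>s\<in>{0..T}. \<bar>g s\<bar> \<le> \<bar>m s\<bar>"
    and ab: "0 \<le> a" "a \<le> b" "b \<le> T" "b - a \<le> 1/4" and "m a > 0"
  shows "\<forall>t\<in>{a..b}. m t > 0"
proof -
  have "continuous_on {a..b} (\<lambda>u. \<bar>m u\<bar>)"
    using continuous_on_subset[OF cont, of "{a..b}"] ab by (auto intro: continuous_intros)
  then obtain s where s: "s \<in> {a..b}" and s_max: "\<forall>u\<in>{a..b}. \<bar>m u\<bar> \<le> \<bar>m s\<bar>"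
    using continuous_attains_sup[OF compact_Icc] ab by force
  have close: "\<bar>m t - m a\<bar> \<le> \<bar>m s\<bar> / 4" if t: "t \<in> {a..b}" for t
  proof -
    have "\<bar>g u\<bar> \<le> \<bar>m s\<bar>" if "u \<in> {a..t}" for u
    proof -
      have "u \<in> {0..T}" "u \<in> {a..b}" using that t ab by auto
      then show ?thesis using order_trans[OF bspec[OF growth] bspec[OF s_max]] by blast
    qed
    moreover have "a \<le> t" "t \<le> T" using t ab by auto
    ultimately have "\<bar>m t - m a\<bar> \<le> \<bar>m s\<bar> * (t - a)"
      using integral_equation_increment_bound[OF eq ab(1)] by blast
    also have "\<dots> \<le> \<bar>m s\<bar> * (1/4)" using t ab by (intro mult_left_mono) auto
    finally show ?thesis by simp
  qed
  have "\<bar>m s\<bar> \<le> 4/3 * m a" using close[OF s] \<open>m a > 0\<close> by linarith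
  show ?thesis
  proof
    fix t assume "t \<in> {a..b}"
    have "m a - \<bar>m s\<bar> / 4 \<le> m t" using abs_le_D2[OF close[OF \<open>t \<in> {a..b}\<close>]] by linarith
    with \<open>\<bar>m s\<bar> \<le> 4/3 * m a\<close> \<open>m a > 0\<close> show "m t > 0" by linarith
  qed
qed

lemma integral_equation_stays_positive:
  fixes m g :: "real \<Rightarrow> real"
  assumes cont: "continuous_on {0..T} m"
    and eq: "\<forall>t\<in>{0..T}. g integrable_on {0..t} \<and> m t = m0 + integral {0..t} g"
    and growth: "\<forall>s\<in>{0..T}. \<bar>g s\<bar> \<le> \<bar>m s\<bar>"
    and "m0 > 0"
  shows "\<forall>t\<in>{0..T}. m t > 0"
proof -
  have "\<forall>t\<in>{0..T}. t \<le> real k / 4 \<longrightarrow> m t > 0" for k :: nat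
  proof (induction k)
    case 0
    show ?case
    proof (intro ballI impI)
      fix t assume "t \<in> {0..T}" "t \<le> real 0 / 4"
      moreover from eq have "m t = m0 + integral {0..t} g" using \<open>t \<in> {0..T}\<close> by blast
      ultimately show "m t > 0" using \<open>m0 > 0\<close> by simp
    qed
  next
    case (Suc k)
    show ?case
    proof (intro ballI impI)
      fix t assume t: "t \<in> {0..T}" "t \<le> real (Suc k) / 4"
      show "m t > 0"
      proof (cases "t \<le> real k / 4")
        case True
        then show ?thesis using bspec[OF Suc.IH t(1)] by simp
      next
        case False
        then have k: "0 \<le> real k / 4" "real k / 4 \<le> t" "t - real k / 4 \<le> 1/4"
          "real k / 4 \<in> {0..T}" "t \<le> T"
          using t by auto
        have "m (real k / 4) > 0" using bspec[OF Suc.IH k(4)] by simp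
        with integral_equation_positive_on_short_interval[OF cont eq growth k(1,2,5,3)]
        have "\<forall>u\<in>{real k / 4..t}. m u > 0" .
        with k(2) show ?thesis by simp
      qed
    qed
  qed
  moreover have "t \<le> real (nat \<lceil>4 * t\<rceil>) / 4" for t :: real
    using real_nat_ceiling_ge[of "4 * t"] by simp
  ultimately show ?thesis by blast
qed

lemma state_sol_mean_continuous:
  assumes "state_sol N T \<alpha> \<xi>0 \<xi>"
  shows "continuous_on {0..T} (\<lambda>t. mean N (\<xi> t))"
proof -
  have "\<forall>i<N. continuous_on {0..T} (\<lambda>t. \<xi> t i)" using assms by (simp add: state_sol_def)
  then show ?thesis unfolding mean_def divide_inverse
    by (intro continuous_on_mult_right continuous_on_sum) auto
qed

lemma state_sol_mean_integral_equation:
  assumes "N > 0" and sol: "state_sol N T \<alpha> \<xi>0 \<xi>" and t: "t \<in> {0..T}"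
  defines "g \<equiv> \<lambda>s. - ((\<Sum>i<N. \<alpha> s i) / real N) * mean N (\<xi> s)"
  shows "g integrable_on {0..t} \<and> mean N (\<xi> t) = mean N \<xi>0 + integral {0..t} g"
proof -
  define h where "h i s = - \<xi> s i + (1 - \<alpha> s i) * mean N (\<xi> s)" for i s
  have "\<forall>i<N. h i integrable_on {0..t} \<and> \<xi> t i = \<xi>0 i + integral {0..t} (h i)"
    using sol t unfolding state_sol_def h_def by blast
  then have h_int: "\<And>i. i \<in> {..<N} \<Longrightarrow> h i integrable_on {0..t}"
    and h_eq: "\<And>i. i \<in> {..<N} \<Longrightarrow> integral {0..t} (h i) = \<xi> t i - \<xi>0 i"
    by auto
  have "(\<Sum>i<N. h i s) = - (\<Sum>i<N. \<xi> s i) + real N * mean N (\<xi> s)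
                          - (\<Sum>i<N. \<alpha> s i) * mean N (\<xi> s)" for s
    by (simp add: h_def sum.distrib sum_subtractf left_diff_distrib sum_distrib_right sum_negf)
  then have g_eq: "g = (\<lambda>s. (\<Sum>i<N. h i s) / real N)"
    using \<open>N > 0\<close> by (auto simp: g_def mean_def field_simps)
  have "integral {0..t} g = (\<Sum>i<N. integral {0..t} (h i)) / real N"
    unfolding g_eq using integral_sum[of "{..<N}" h "{0..t}"] h_int by simp
  also have "\<dots> = mean N (\<xi> t) - mean N \<xi>0"
    using h_eq by (simp add: mean_def sum_subtractf diff_divide_distrib)
  finally show ?thesis
    unfolding g_eq using integrable_on_divide[OF integrable_sum[of "{..<N}" h]] h_int by auto
qed

lemma state_sol_mean_positive:
  assumes "N > 0" and adm: "admissible N M T \<alpha>" and sol: "state_sol N T \<alpha> \<xi>0 \<xi>"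
    and "mean N \<xi>0 > 0"
  shows "\<forall>t\<in>{0..T}. mean N (\<xi> t) > 0"
proof (rule integral_equation_stays_positive)
  let ?g = "\<lambda>s. - ((\<Sum>i<N. \<alpha> s i) / real N) * mean N (\<xi> s)"
  show "\<forall>t\<in>{0..T}. ?g integrable_on {0..t} \<and> mean N (\<xi> t) = mean N \<xi>0 + integral {0..t} ?g"
    using state_sol_mean_integral_equation[OF \<open>N > 0\<close> sol] by blast
  show "\<forall>s\<in>{0..T}. \<bar>?g s\<bar> \<le> \<bar>mean N (\<xi> s)\<bar>"
  proof
    fix s assume s: "s \<in> {0..T}"
    have "\<forall>i<N. 0 \<le> \<alpha> s i \<and> \<alpha> s i \<le> 1" using adm s by (simp add: admissible_def)
    then have "0 \<le> (\<Sum>i<N. \<alpha> s i)" "(\<Sum>i<N. \<alpha> s i) \<le> real N"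
      using sum_nonneg[of "{..<N}" "\<alpha> s"] sum_mono[of "{..<N}" "\<alpha> s" "\<lambda>_. 1"] by auto
    then have "\<bar>(\<Sum>i<N. \<alpha> s i) / real N\<bar> \<le> 1" using \<open>N > 0\<close> by simp
    from mult_right_mono[OF this abs_ge_zero[of "mean N (\<xi> s)"]]
    show "\<bar>?g s\<bar> \<le> \<bar>mean N (\<xi> s)\<bar>" by (simp add: abs_mult)
  qed
qed (use assms state_sol_mean_continuous in auto)

theorem proposition4:
  fixes N :: nat and T M :: real
    and \<xi>0 :: "nat \<Rightarrow> real"
    and \<alpha> \<xi> lam :: "real \<Rightarrow> nat \<Rightarrow> real"
  assumes "N \<ge> 1" and "T > 0" and "M > 0"
    and "mean N \<xi>0 > 0"
    and "\<forall>i j. i \<le> j \<and> j < N \<longrightarrow> \<xi>0 j \<le> \<xi>0 i"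
    and "optimal_control N M T \<xi>0 \<alpha>"
    and "state_sol N T \<alpha> \<xi>0 \<xi>"
    and "costate_sol N T \<alpha> \<xi> lam"
    and "pmp_min N M T \<alpha> \<xi> lam"
  shows "AE t in lborel. t \<in> {0..T} \<longrightarrow>
           ({i. i < N \<and> lam t i \<ge> 0} = {} \<longrightarrow> (\<forall>i<N. \<alpha> t i = 0)) \<and>
           ({i. i < N \<and> lam t i > 0} \<noteq> {} \<longrightarrow>
              (\<exists>i<N. lam t i > 0 \<and> \<alpha> t i > 0) \<and>
              (\<Sum>j<N. \<alpha> t j) \<ge> min (real (card {i. i < N \<and> lam t i > 0})) M)"
proof -
  have adm: "admissible N M T \<alpha>" using assms(6) by (simp add: optimal_control_def)
  have mean_pos: "\<forall>t\<in>{0..T}. mean N (\<xi> t) > 0"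
    using state_sol_mean_positive[OF _ adm assms(7,4)] assms(1) by simp
  have maximizer: "\<alpha> t \<in> capped_box N M \<and>
      (\<forall>a\<in>capped_box N M. (\<Sum>i<N. a i * lam t i) \<le> (\<Sum>i<N. \<alpha> t i * lam t i))"
    if t: "t \<in> {0..T}" and min: "\<forall>a. (\<forall>i<N. 0 \<le> a i \<and> a i \<le> 1) \<and> (\<Sum>i<N. a i) \<le> M \<longrightarrow>
        - mean N (\<xi> t) * (\<Sum>i<N. \<alpha> t i * lam t i) \<le> - mean N (\<xi> t) * (\<Sum>i<N. a i * lam t i)"
    for t
    using adm min mean_pos t by (auto simp: admissible_def capped_box_def)
  show ?thesis
    using assms(9) unfolding pmp_min_def
  proof (elim AE_mp, intro AE_I2 impI)
    fix t assume "t \<in> {0..T}" and "t \<in> {0..T} \<longrightarrow> (\<forall>a. (\<forall>i<N. 0 \<le> a i \<and> a i \<le> 1) \<and>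
        (\<Sum>i<N. a i) \<le> M \<longrightarrow>
        - mean N (\<xi> t) * (\<Sum>i<N. \<alpha> t i * lam t i) \<le> - mean N (\<xi> t) * (\<Sum>i<N. a i * lam t i))"
    with maximizer have x: "\<alpha> t \<in> capped_box N M"
      and max: "\<forall>a\<in>capped_box N M. (\<Sum>i<N. a i * lam t i) \<le> (\<Sum>i<N. \<alpha> t i * lam t i)"
      by blast+
    show "({i. i < N \<and> lam t i \<ge> 0} = {} \<longrightarrow> (\<forall>i<N. \<alpha> t i = 0)) \<and>
        ({i. i < N \<and> lam t i > 0} \<noteq> {} \<longrightarrow>
          (\<exists>i<N. lam t i > 0 \<and> \<alpha> t i > 0) \<and>
          (\<Sum>j<N. \<alpha> t j) \<ge> min (real (card {i. i < N \<and> lam t i > 0})) M)"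
      using capped_box_maximizer_vanishes_if_weights_negative[OF x max]
        capped_box_maximizer_sum_ge[OF x max]
        capped_box_maximizer_charges_positive_weight[OF x max \<open>M > 0\<close>]
      by (auto simp: not_le)
  qed
qed

end
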